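(* Let $x\in\mathbb{R}^d$ and $i\in\{1,\dots,d\}$ with $g_i:=\nabla_i f(x)\ne0$. Suppose $\hat g_i$ is a real random variable with $\mathbb{E}\hat g_i=g_i$, variance $\sigma_i^2$, whose distribution is unimodal and symmetric (about $g_i$). Then $$\rho_i:=\mathrm{Prob}(\mathrm{sign}\,\hat g_i=\mathrm{sign}\,g_i)\ge\frac12+\frac12\frac{|g_i|}{|g_i|+\sqrt3\sigma_i}>\frac12.$$
   Context: $\mathrm{sign}\,t=1,0,-1$ for $t>0,t=0,t<0$. *)

theory Defs
  imports "HOL-Probability.Probability"
begin

definition cdf_of :: "'a measure \<Rightarrow> ('a \<Rightarrow> real) \<Rightarrow> real \<Rightarrow> real" where
  "cdf_of M X t = measure M {\<omega> \<in> space M. X \<omega> \<le> t}"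

text \<open>Unimodal (Khintchine): there is a mode m such that the CDF is convex
  on (-inf,m) and concave on (m,inf).\<close>
definition unimodal :: "'a measure \<Rightarrow> ('a \<Rightarrow> real) \<Rightarrow> bool" where
  "unimodal M X \<longleftrightarrow>
     (\<exists>m. convex_on {..<m} (cdf_of M X) \<and> concave_on {m<..} (cdf_of M X))"

definition symmetric_about :: "'a measure \<Rightarrow> ('a \<Rightarrow> real) \<Rightarrow> real \<Rightarrow> bool" where
  "symmetric_about M X c \<longleftrightarrow> distr M borel X = distr M borel (\<lambda>\<omega>. 2 * c - X \<omega>)"

end

theory Submission
  imports Defs
begin

(* Let V = |X - g| and p = P(X \<le> g - |g|). By symmetry P(V \<ge> t) = 2 P(X \<le> g - t), and
   sgn X = sgn g exactly off an event of probability p. Unimodality makes t \<mapsto> P(X \<le> g - t)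
   (or, when the mode lies left of g, the upper tail) convex on (0,\<infinity>), and as it is at most 1/2
   this yields the chord bound P(V \<ge> t) \<ge> 1 - t (1 - 2p) / |g| for t \<ge> |g|. Feeding this
   and P(V \<ge> t) \<ge> 2p for t \<le> |g| into E V\<^sup>2 = \<integral> 2t P(V \<ge> t) dt, cut off where the chord
   bound vanishes, gives \<sigma>\<^sup>2 \<ge> |g|\<^sup>2 (1 - q\<^sup>3) / (3 q\<^sup>2) with q = 1 - 2p, hence
   2p |g| \<le> \<surd>3 \<sigma> (1 - 2p), which is the claim. *)

lemma field_le_linear_epsilon:
  fixes x y b c :: real
  assumes "0 < c" and "\<And>d. 0 < d \<Longrightarrow> d < c \<Longrightarrow> x \<le> y + d * b"
  shows "x \<le> y"
proof (rule tendsto_lowerbound)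
  show "((\<lambda>d. y + d * b) \<longlongrightarrow> y) (at_right 0)"
    by (auto intro!: tendsto_eq_intros)
  show "\<forall>\<^sub>F d in at_right 0. x \<le> y + d * b"
    unfolding eventually_at_right[OF assms(1)] using assms by (intro exI[of _ c]) auto
qed simp

lemma convex_on_chord_from_origin:
  fixes h :: "real \<Rightarrow> real"
  assumes cvx: "convex_on {0<..} h" and bound: "\<And>u. 0 < u \<Longrightarrow> h u \<le> c"
    and "0 < k" "k \<le> t"
  shows "t * h k \<le> k * h t + (t - k) * c"
proof (rule field_le_linear_epsilon[OF \<open>0 < k\<close>])
  fix d assume d: "0 < d" "d < k"
  have "convex_on {d..t} h"
    using d by (intro convex_on_subset[OF cvx]) auto
  then have "h k \<le> (h t - h d) / (t - d) * (k - d) + h d"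
    using d \<open>k \<le> t\<close> by (intro convex_onD_Icc') auto
  then have "(t - d) * h k \<le> (k - d) * h t + (t - k) * h d"
    using d \<open>k \<le> t\<close> by (simp add: field_simps)
  also have "\<dots> \<le> (k - d) * h t + (t - k) * c"
    using bound[of d] d \<open>k \<le> t\<close> by (intro add_left_mono mult_left_mono) auto
  finally show "t * h k \<le> k * h t + (t - k) * c + d * (h k - h t)"
    by (simp add: algebra_simps)
qed

lemma convex_on_compose_affine:
  fixes f :: "real \<Rightarrow> real"
  assumes "convex_on S f" "convex T" "\<And>u. u \<in> T \<Longrightarrow> a + b * u \<in> S"
  shows "convex_on T (\<lambda>u. f (a + b * u))"
proof (rule convex_onI[OF _ assms(2)])
  fix t x y :: real assume "0 < t" "t < 1" "x \<in> T" "y \<in> T"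
  then have "f ((1 - t) *\<^sub>R (a + b * x) + t *\<^sub>R (a + b * y)) \<le> (1 - t) * f (a + b * x) + t * f (a + b * y)"
    using assms by (intro convex_onD[OF assms(1)]) auto
  moreover have "(1 - t) *\<^sub>R (a + b * x) + t *\<^sub>R (a + b * y) = a + b * ((1 - t) *\<^sub>R x + t *\<^sub>R y)"
    by (simp add: algebra_simps)
  ultimately show "f (a + b * ((1 - t) *\<^sub>R x + t *\<^sub>R y)) \<le> (1 - t) * f (a + b * x) + t * f (a + b * y)"
    by simp
qed

lemma (in sigma_finite_measure) nn_integral_power2_eq_tail:
  assumes [measurable]: "V \<in> borel_measurable M" and nonneg: "\<And>\<omega>. \<omega> \<in> space M \<Longrightarrow> 0 \<le> V \<omega>"
  shows "(\<integral>\<^sup>+\<omega>. ennreal ((V \<omega>)\<^sup>2) \<partial>M)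
       = (\<integral>\<^sup>+t\<in>{0..}. ennreal (2 * t) * emeasure M {\<omega>\<in>space M. t \<le> V \<omega>} \<partial>lborel)"
proof -
  interpret pair_sigma_finite M lborel
    by (simp add: lborel.sigma_finite_measure_axioms pair_sigma_finite_def sigma_finite_measure_axioms)
  define G where "G \<omega> t = ennreal (2 * t) * indicator {0..} t * indicator {\<omega>\<in>space M. t \<le> V \<omega>} \<omega>"
    for \<omega> t
  have "case_prod G \<in> borel_measurable (M \<Otimes>\<^sub>M lborel)"
    unfolding G_def by measurable
  note Fubini = Fubini'[OF this]
  have "(\<integral>\<^sup>+\<omega>. ennreal ((V \<omega>)\<^sup>2) \<partial>M) = (\<integral>\<^sup>+\<omega>. (\<integral>\<^sup>+t. G \<omega> t \<partial>lborel) \<partial>M)"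
  proof (rule nn_integral_cong)
    fix \<omega> assume \<omega>: "\<omega> \<in> space M"
    have "(\<integral>\<^sup>+t. G \<omega> t \<partial>lborel) = (\<integral>\<^sup>+t. ennreal (2 * t) * indicator {0..V \<omega>} t \<partial>lborel)"
      using \<omega> by (intro nn_integral_cong) (auto simp: G_def split: split_indicator)
    also have "\<dots> = ennreal ((V \<omega>)\<^sup>2 - 0\<^sup>2)"
      using nonneg[OF \<omega>] by (intro nn_integral_FTC_Icc) (auto intro!: derivative_eq_intros)
    finally show "ennreal ((V \<omega>)\<^sup>2) = (\<integral>\<^sup>+t. G \<omega> t \<partial>lborel)"
      by simp
  qed
  also have "\<dots> = (\<integral>\<^sup>+t. (\<integral>\<^sup>+\<omega>. G \<omega> t \<partial>M) \<partial>lborel)"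
    using Fubini by simp
  also have "\<dots> = (\<integral>\<^sup>+t\<in>{0..}. ennreal (2 * t) * emeasure M {\<omega>\<in>space M. t \<le> V \<omega>} \<partial>lborel)"
  proof (rule nn_integral_cong)
    fix t :: real
    have "(\<integral>\<^sup>+\<omega>. G \<omega> t \<partial>M) = ennreal (2 * t) * indicator {0..} t * emeasure M {\<omega>\<in>space M. t \<le> V \<omega>}"
      unfolding G_def by (rule nn_integral_cmult_indicator) measurable
    then show "(\<integral>\<^sup>+\<omega>. G \<omega> t \<partial>M) = ennreal (2 * t) * emeasure M {\<omega>\<in>space M. t \<le> V \<omega>} * indicator {0..} t"
      by (simp add: mult_ac)
  qed
  finally show ?thesis .
qed

lemma ennreal_add_le:
  fixes x y :: real
  assumes "0 \<le> x"
  shows "ennreal (x + y) \<le> ennreal x + ennreal y"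
  using assms by (cases "0 \<le> y") (auto simp: ennreal_plus intro: order_trans[OF ennreal_leI add_increasing2])

lemma (in prob_space) nn_integral_le_second_moment:
  fixes V :: "'a \<Rightarrow> real" and f :: "real \<Rightarrow> ennreal"
  assumes [measurable]: "V \<in> borel_measurable M"
    and nonneg: "\<And>\<omega>. \<omega> \<in> space M \<Longrightarrow> 0 \<le> V \<omega>"
    and int: "integrable M (\<lambda>\<omega>. (V \<omega>)\<^sup>2)"
    and le: "AE t in lborel. 0 \<le> t \<longrightarrow> f t \<le> ennreal (2 * t * prob {\<omega>\<in>space M. t \<le> V \<omega>})"
    and zero: "\<And>t. t < 0 \<Longrightarrow> f t = 0"
  shows "(\<integral>\<^sup>+t. f t \<partial>lborel) \<le> ennreal (expectation (\<lambda>\<omega>. (V \<omega>)\<^sup>2))"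
proof -
  have "AE t in lborel. f t \<le> ennreal (2 * t) * emeasure M {\<omega>\<in>space M. t \<le> V \<omega>} * indicator {0..} t"
    using le by eventually_elim (auto simp: zero emeasure_eq_measure ennreal_mult' indicator_def)
  then have "(\<integral>\<^sup>+t. f t \<partial>lborel)
      \<le> (\<integral>\<^sup>+t\<in>{0..}. ennreal (2 * t) * emeasure M {\<omega>\<in>space M. t \<le> V \<omega>} \<partial>lborel)"
    by (rule nn_integral_mono_AE)
  also have "\<dots> = (\<integral>\<^sup>+\<omega>. ennreal ((V \<omega>)\<^sup>2) \<partial>M)"
    by (rule nn_integral_power2_eq_tail[symmetric]) (use nonneg in auto)
  also have "\<dots> = ennreal (expectation (\<lambda>\<omega>. (V \<omega>)\<^sup>2))"
    by (rule nn_integral_eq_integral[OF int]) auto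
  finally show ?thesis .
qed

lemma (in prob_space) second_moment_ge_of_tail_bounds:
  fixes V :: "'a \<Rightarrow> real" and k q R :: real
  assumes "V \<in> borel_measurable M"
    and "\<And>\<omega>. \<omega> \<in> space M \<Longrightarrow> 0 \<le> V \<omega>"
    and "integrable M (\<lambda>\<omega>. (V \<omega>)\<^sup>2)"
    and "0 < k" "0 \<le> q" "q \<le> 1" "k \<le> R" "R * q \<le> k"
    and near: "\<And>t. 0 < t \<Longrightarrow> t \<le> k \<Longrightarrow> 1 - q \<le> prob {\<omega>\<in>space M. t \<le> V \<omega>}"
    and far: "\<And>t. k < t \<Longrightarrow> k - t * q \<le> k * prob {\<omega>\<in>space M. t \<le> V \<omega>}"
  shows "R\<^sup>2 - 2 * q / (3 * k) * R ^ 3 - q * k\<^sup>2 / 3 \<le> expectation (\<lambda>\<omega>. (V \<omega>)\<^sup>2)"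
proof -
  \<comment> \<open>the lower bound for 2 t P(V \<ge> t) supplied by the two tail hypotheses\<close>
  define \<phi> where "\<phi> t = ennreal (2 * t * (1 - q)) * indicator {0..k} t
    + ennreal (2 * t - 2 * q / k * t\<^sup>2) * indicator {k..R} t" for t
  have "(\<integral>\<^sup>+t. \<phi> t \<partial>lborel) \<le> ennreal (expectation (\<lambda>\<omega>. (V \<omega>)\<^sup>2))"
  proof (rule nn_integral_le_second_moment[OF assms(1-3)])
    show "AE t in lborel. 0 \<le> t \<longrightarrow> \<phi> t \<le> ennreal (2 * t * prob {\<omega>\<in>space M. t \<le> V \<omega>})"
      using AE_lborel_singleton[of k]
    proof eventually_elim
      case (elim t)
      let ?P = "prob {\<omega>\<in>space M. t \<le> V \<omega>}"
      consider "t \<le> 0" | "0 < t" "t < k" | "k < t" "t \<le> R" | "R < t"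
        using elim by linarith
      then show ?case
      proof cases
        case 2
        then have "2 * t * (1 - q) \<le> 2 * t * ?P"
          using near[of t] by (intro mult_left_mono) auto
        then show ?thesis
          using 2 by (simp add: \<phi>_def ennreal_leI)
      next
        case 3
        have "2 * t / k * (k - t * q) \<le> 2 * t / k * (k * ?P)"
          using 3 far[of t] \<open>0 < k\<close> by (intro mult_left_mono) auto
        then have "2 * t - 2 * q / k * t\<^sup>2 \<le> 2 * t * ?P"
          using \<open>0 < k\<close> by (simp add: field_simps power2_eq_square)
        then show ?thesis
          using 3 \<open>0 < k\<close> by (simp add: \<phi>_def ennreal_leI)
      qed (use \<open>0 < k\<close> \<open>k \<le> R\<close> in \<open>auto simp: \<phi>_def indicator_def\<close>)
    qed
    show "\<phi> t = 0" if "t < 0" for t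
      using that \<open>0 < k\<close> by (simp add: \<phi>_def)
  qed
  moreover have "(\<integral>\<^sup>+t. \<phi> t \<partial>lborel) = ennreal (k\<^sup>2 * (1 - q))
      + ennreal ((R\<^sup>2 - 2 * q / (3 * k) * R ^ 3) - (k\<^sup>2 - 2 * q / (3 * k) * k ^ 3))"
  proof -
    have "(\<integral>\<^sup>+t. ennreal (2 * t * (1 - q)) * indicator {0..k} t \<partial>lborel) = ennreal (k\<^sup>2 * (1 - q) - 0\<^sup>2 * (1 - q))"
      using \<open>0 < k\<close> \<open>q \<le> 1\<close> by (intro nn_integral_FTC_Icc) (auto intro!: derivative_eq_intros)
    moreover have "(\<integral>\<^sup>+t. ennreal (2 * t - 2 * q / k * t\<^sup>2) * indicator {k..R} t \<partial>lborel)
        = ennreal ((R\<^sup>2 - 2 * q / (3 * k) * R ^ 3) - (k\<^sup>2 - 2 * q / (3 * k) * k ^ 3))"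
    proof (rule nn_integral_FTC_Icc)
      fix x assume x: "x \<in> {k..R}"
      show "((\<lambda>t. t\<^sup>2 - 2 * q / (3 * k) * t ^ 3) has_real_derivative (2 * x - 2 * q / k * x\<^sup>2)) (at x)"
        using \<open>0 < k\<close> by (auto intro!: derivative_eq_intros simp: field_simps power2_eq_square)
      have "x * q \<le> k"
        using x \<open>R * q \<le> k\<close> \<open>0 \<le> q\<close> by (meson atLeastAtMost_iff mult_right_mono order_trans)
      then show "0 \<le> 2 * x - 2 * q / k * x\<^sup>2"
        using \<open>0 < k\<close> x by (simp add: field_simps power2_eq_square)
    qed (use \<open>k \<le> R\<close> in auto)
    ultimately show ?thesis
      unfolding \<phi>_def by (subst nn_integral_add) auto
  qed
  ultimately have sum: "ennreal (k\<^sup>2 * (1 - q)) + ennreal ((R\<^sup>2 - 2 * q / (3 * k) * R ^ 3) - (k\<^sup>2 - 2 * q / (3 * k) * k ^ 3))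
      \<le> ennreal (expectation (\<lambda>\<omega>. (V \<omega>)\<^sup>2))"
    by simp
  have "ennreal (k\<^sup>2 * (1 - q) + ((R\<^sup>2 - 2 * q / (3 * k) * R ^ 3) - (k\<^sup>2 - 2 * q / (3 * k) * k ^ 3)))
      \<le> ennreal (expectation (\<lambda>\<omega>. (V \<omega>)\<^sup>2))"
    by (rule order_trans[OF ennreal_add_le sum]) (use \<open>q \<le> 1\<close> in simp)
  then have "k\<^sup>2 * (1 - q) + ((R\<^sup>2 - 2 * q / (3 * k) * R ^ 3) - (k\<^sup>2 - 2 * q / (3 * k) * k ^ 3))
      \<le> expectation (\<lambda>\<omega>. (V \<omega>)\<^sup>2)"
    by (simp add: integral_nonneg_AE)
  then show ?thesis
    using \<open>0 < k\<close> by (simp add: field_simps power2_eq_square power3_eq_cube)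
qed

lemma (in prob_space) tail_mass_le_of_tail_bounds:
  fixes V :: "'a \<Rightarrow> real" and k q :: real
  assumes "V \<in> borel_measurable M"
    and "\<And>\<omega>. \<omega> \<in> space M \<Longrightarrow> 0 \<le> V \<omega>"
    and "integrable M (\<lambda>\<omega>. (V \<omega>)\<^sup>2)"
    and "0 < k" "0 \<le> q" "q \<le> 1"
    and "\<And>t. 0 < t \<Longrightarrow> t \<le> k \<Longrightarrow> 1 - q \<le> prob {\<omega>\<in>space M. t \<le> V \<omega>}"
    and "\<And>t. k < t \<Longrightarrow> k - t * q \<le> k * prob {\<omega>\<in>space M. t \<le> V \<omega>}"
  shows "k * (1 - q) \<le> sqrt (3 * expectation (\<lambda>\<omega>. (V \<omega>)\<^sup>2)) * q"
proof -
  define E where "E = expectation (\<lambda>\<omega>. (V \<omega>)\<^sup>2)"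
  have E: "0 \<le> E"
    unfolding E_def by (simp add: integral_nonneg_AE)
  note moment = second_moment_ge_of_tail_bounds[OF assms(1-6) _ _ assms(7,8), folded E_def]
  show ?thesis
  proof (cases "q = 0")
    case True
    \<comment> \<open>then V exceeds every level almost surely, contradicting the finite second moment\<close>
    have "(k + sqrt E)\<^sup>2 \<le> E"
      using moment[of "k + sqrt E"] True E \<open>0 < k\<close> by (simp del: power2_sum)
    moreover have "(sqrt E)\<^sup>2 < (k + sqrt E)\<^sup>2"
      using \<open>0 < k\<close> E by (intro power_strict_mono) auto
    ultimately show ?thesis using E by simp
  next
    case False
    then have "0 < q" using \<open>0 \<le> q\<close> by simp
    \<comment> \<open>R = k / q is where the bound k - t q on k P(V \<ge> t) reaches zero\<close>
    have "(k / q)\<^sup>2 - 2 * q / (3 * k) * (k / q) ^ 3 - q * k\<^sup>2 / 3 \<le> E"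
      using \<open>0 < k\<close> \<open>0 < q\<close> \<open>q \<le> 1\<close> by (intro moment) (simp_all add: field_simps)
    moreover have "(k / q)\<^sup>2 - 2 * q / (3 * k) * (k / q) ^ 3 = k\<^sup>2 / (3 * q\<^sup>2)"
      using \<open>0 < k\<close> \<open>0 < q\<close> by (simp add: field_simps power2_eq_square power3_eq_cube)
    ultimately have "3 * q\<^sup>2 * (k\<^sup>2 / (3 * q\<^sup>2) - q * k\<^sup>2 / 3) \<le> 3 * q\<^sup>2 * E"
      by (intro mult_left_mono) auto
    moreover have "3 * q\<^sup>2 * (k\<^sup>2 / (3 * q\<^sup>2) - q * k\<^sup>2 / 3) = k\<^sup>2 * (1 - q ^ 3)"
      using \<open>0 < q\<close> by (simp add: field_simps power2_eq_square power3_eq_cube)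
    ultimately have "k\<^sup>2 * (1 - q ^ 3) \<le> 3 * E * q\<^sup>2"
      by (simp add: mult_ac)
    have "(k * (1 - q))\<^sup>2 = k\<^sup>2 * (1 - q)\<^sup>2"
      by (simp add: power_mult_distrib)
    also have "\<dots> \<le> k\<^sup>2 * (1 - q ^ 3)"
      using \<open>0 \<le> q\<close> \<open>q \<le> 1\<close> mult_nonneg_nonneg[of "q * (q + 2)" "1 - q"]
      by (intro mult_left_mono) (simp_all add: power2_eq_square power3_eq_cube algebra_simps)
    also have "\<dots> \<le> 3 * E * q\<^sup>2" by fact
    also have "\<dots> = (sqrt (3 * E) * q)\<^sup>2"
      using E by (simp add: power_mult_distrib)
    finally have "(k * (1 - q))\<^sup>2 \<le> (sqrt (3 * E) * q)\<^sup>2" .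
    then show ?thesis
      unfolding E_def[symmetric] by (rule power2_le_imp_le) (use E \<open>0 < q\<close> in simp)
  qed
qed

lemma symmetric_about_upper_tail:
  assumes [measurable]: "X \<in> borel_measurable M" and "symmetric_about M X g"
  shows "measure M {\<omega>\<in>space M. g + u \<le> X \<omega>} = cdf_of M X (g - u)"
proof -
  have "cdf_of M X (g - u) = measure (distr M borel X) {..g - u}"
    by (subst measure_distr) (auto simp: cdf_of_def intro!: arg_cong[where f = "measure M"])
  also have "\<dots> = measure (distr M borel (\<lambda>\<omega>. 2 * g - X \<omega>)) {..g - u}"
    using assms(2) by (simp add: symmetric_about_def)
  also have "\<dots> = measure M {\<omega>\<in>space M. g + u \<le> X \<omega>}"
    by (subst measure_distr) (auto intro!: arg_cong[where f = "measure M"])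
  finally show ?thesis ..
qed

lemma (in prob_space) prob_abs_dev_ge:
  assumes [measurable]: "X \<in> borel_measurable M" and "symmetric_about M X g" and "0 < u"
  shows "prob {\<omega>\<in>space M. u \<le> \<bar>X \<omega> - g\<bar>} = 2 * cdf_of M X (g - u)"
proof -
  have "{\<omega>\<in>space M. u \<le> \<bar>X \<omega> - g\<bar>} = {\<omega>\<in>space M. X \<omega> \<le> g - u} \<union> {\<omega>\<in>space M. g + u \<le> X \<omega>}"
    by auto
  moreover have "{\<omega>\<in>space M. X \<omega> \<le> g - u} \<inter> {\<omega>\<in>space M. g + u \<le> X \<omega>} = {}"
    using \<open>0 < u\<close> by auto
  ultimately show ?thesis
    using symmetric_about_upper_tail[OF assms(1,2), of u]
    by (simp add: finite_measure_Union cdf_of_def)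
qed

lemma (in prob_space) cdf_of_le_half_below_center:
  assumes "X \<in> borel_measurable M" and "symmetric_about M X g" and "0 < u"
  shows "cdf_of M X (g - u) \<le> 1 / 2"
  using prob_abs_dev_ge[OF assms] prob_le_1[of "{\<omega>\<in>space M. u \<le> \<bar>X \<omega> - g\<bar>}"] by simp

lemma (in prob_space) unimodal_symmetric_cdf_chord:
  assumes [measurable]: "X \<in> borel_measurable M"
    and "unimodal M X" and symm: "symmetric_about M X g" and "0 < k" "k \<le> t"
  shows "t * cdf_of M X (g - k) \<le> k * cdf_of M X (g - t) + (t - k) / 2"
proof -
  let ?F = "cdf_of M X"
  have half: "\<And>u. 0 < u \<Longrightarrow> ?F (g - u) \<le> 1 / 2"
    using cdf_of_le_half_below_center[OF assms(1) symm] .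
  obtain m where cvx: "convex_on {..<m} ?F" and ccv: "concave_on {m<..} ?F"
    using \<open>unimodal M X\<close> unfolding unimodal_def by blast
  show ?thesis
  proof (cases "g \<le> m")
    case True
    have "convex_on {0<..} (\<lambda>u. ?F (g + (-1) * u))"
      using True by (intro convex_on_compose_affine[OF cvx]) auto
    then have "t * ?F (g - k) \<le> k * ?F (g - t) + (t - k) * (1 / 2)"
      using half \<open>0 < k\<close> \<open>k \<le> t\<close> by (intro convex_on_chord_from_origin) auto
    then show ?thesis by simp
  next
    case False
    \<comment> \<open>the CDF is concave to the right of the centre, so use the upper tail instead\<close>
    define J where "J u = 1 - ?F (g + u)" for u
    have J_eq: "J u = prob {\<omega>\<in>space M. g + u < X \<omega>}" for u
    proof -
      have "space M - {\<omega>\<in>space M. X \<omega> \<le> g + u} = {\<omega>\<in>space M. g + u < X \<omega>}"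
        by auto
      then show ?thesis
        using prob_compl[of "{\<omega>\<in>space M. X \<omega> \<le> g + u}"] by (simp add: J_def cdf_of_def)
    qed
    have J_le: "J u \<le> ?F (g - u)" for u
      unfolding J_eq symmetric_about_upper_tail[OF assms(1) symm, symmetric]
      by (intro finite_measure_mono) auto
    have "convex_on {m<..} (\<lambda>x. 1 - ?F x)"
      using ccv by (simp add: concave_on_iff convex_on_def algebra_simps)
    then have "convex_on {0<..} J"
      unfolding J_def using False by (intro convex_on_compose_affine[where b = 1, simplified]) auto
    show ?thesis
    proof (rule field_le_linear_epsilon[OF \<open>0 < k\<close>])
      fix d assume d: "0 < d" "d < k"
      have "?F (g - k) \<le> J (k - d)"
        unfolding J_eq symmetric_about_upper_tail[OF assms(1) symm, symmetric]
        using d by (intro finite_measure_mono) auto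
      then have "t * ?F (g - k) \<le> t * J (k - d)"
        using \<open>0 < k\<close> \<open>k \<le> t\<close> by (intro mult_left_mono) auto
      also have "\<dots> \<le> (k - d) * J t + (t - (k - d)) * (1 / 2)"
        using \<open>convex_on {0<..} J\<close> d \<open>k \<le> t\<close> order_trans[OF J_le half]
        by (intro convex_on_chord_from_origin) auto
      also have "\<dots> \<le> (k - d) * ?F (g - t) + (t - (k - d)) * (1 / 2)"
        using J_le d by (intro add_right_mono mult_left_mono) auto
      finally show "t * ?F (g - k) \<le> k * ?F (g - t) + (t - k) / 2 + d * (1 / 2 - ?F (g - t))"
        by (simp add: field_simps)
    qed
  qed
qed

lemma (in prob_space) prob_sgn_eq_sgn_center:
  assumes [measurable]: "X \<in> borel_measurable M" and "symmetric_about M X g" and "g \<noteq> 0"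
  shows "prob {\<omega>\<in>space M. sgn (X \<omega>) = sgn g} = 1 - cdf_of M X (g - \<bar>g\<bar>)"
proof (cases "0 < g")
  case True
  then have "{\<omega>\<in>space M. sgn (X \<omega>) = sgn g} = space M - {\<omega>\<in>space M. X \<omega> \<le> g - \<bar>g\<bar>}"
    by (auto simp: sgn_if split: if_splits)
  then show ?thesis
    using prob_compl[of "{\<omega>\<in>space M. X \<omega> \<le> g - \<bar>g\<bar>}"] by (simp add: cdf_of_def)
next
  case False
  then have "{\<omega>\<in>space M. sgn (X \<omega>) = sgn g} = space M - {\<omega>\<in>space M. g + \<bar>g\<bar> \<le> X \<omega>}"
    using \<open>g \<noteq> 0\<close> by (auto simp: sgn_if split: if_splits)
  then show ?thesis
    using prob_compl[of "{\<omega>\<in>space M. g + \<bar>g\<bar> \<le> X \<omega>}"] symmetric_about_upper_tail[OF assms(1,2)]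
    by simp
qed

lemma (in prob_space) unimodal_symmetric_deviation_bound:
  assumes [measurable]: "X \<in> borel_measurable M"
    and "integrable M (\<lambda>\<omega>. (X \<omega> - g)\<^sup>2)"
    and "unimodal M X" and "symmetric_about M X g" and "0 < k"
  shows "2 * k * cdf_of M X (g - k)
    \<le> sqrt (3 * expectation (\<lambda>\<omega>. (X \<omega> - g)\<^sup>2)) * (1 - 2 * cdf_of M X (g - k))"
proof -
  define V where "V \<omega> = \<bar>X \<omega> - g\<bar>" for \<omega>
  define p where "p = cdf_of M X (g - k)"
  have tail: "prob {\<omega>\<in>space M. t \<le> V \<omega>} = 2 * cdf_of M X (g - t)" if "0 < t" for t
    unfolding V_def using prob_abs_dev_ge[OF assms(1) \<open>symmetric_about M X g\<close> that] .
  have "k * (1 - (1 - 2 * p)) \<le> sqrt (3 * expectation (\<lambda>\<omega>. (V \<omega>)\<^sup>2)) * (1 - 2 * p)"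
  proof (rule tail_mass_le_of_tail_bounds)
    show "0 \<le> 1 - 2 * p" "1 - 2 * p \<le> 1"
      using cdf_of_le_half_below_center[OF assms(1) \<open>symmetric_about M X g\<close> \<open>0 < k\<close>]
      by (auto simp: p_def cdf_of_def)
    show "1 - (1 - 2 * p) \<le> prob {\<omega>\<in>space M. t \<le> V \<omega>}" if "0 < t" "t \<le> k" for t
      unfolding tail[OF \<open>0 < t\<close>] p_def cdf_of_def using that by (auto intro!: finite_measure_mono)
    show "k - t * (1 - 2 * p) \<le> k * prob {\<omega>\<in>space M. t \<le> V \<omega>}" if "k < t" for t
      using unimodal_symmetric_cdf_chord[OF assms(1) \<open>unimodal M X\<close> \<open>symmetric_about M X g\<close> \<open>0 < k\<close>, of t]
        tail[of t] that \<open>0 < k\<close> by (simp add: p_def field_simps)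
  qed (use assms(2) \<open>0 < k\<close> in \<open>auto simp: V_def\<close>)
  then show ?thesis
    by (simp add: V_def p_def)
qed

theorem lemma1:
  fixes M :: "'a measure" and X :: "'a \<Rightarrow> real" and g \<sigma> :: real
  assumes "prob_space M"
    and "X \<in> borel_measurable M"
    and "integrable M X"
    and "integrable M (\<lambda>\<omega>. (X \<omega>)\<^sup>2)"
    and "g \<noteq> 0"
    and "prob_space.expectation M X = g"
    and "\<sigma> \<ge> 0"
    and "prob_space.variance M X = \<sigma>\<^sup>2"
    and "unimodal M X"
    and "symmetric_about M X g"
  shows "measure M {\<omega> \<in> space M. sgn (X \<omega>) = sgn g}
           \<ge> 1/2 + 1/2 * (\<bar>g\<bar> / (\<bar>g\<bar> + sqrt 3 * \<sigma>))
         \<and> 1/2 + 1/2 * (\<bar>g\<bar> / (\<bar>g\<bar> + sqrt 3 * \<sigma>)) > 1/2"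
proof -
  interpret prob_space M by fact
  define k where "k = \<bar>g\<bar>"
  define p where "p = cdf_of M X (g - k)"
  have "0 < k" using \<open>g \<noteq> 0\<close> by (simp add: k_def)
  have "(\<lambda>\<omega>. (X \<omega> - g)\<^sup>2) = (\<lambda>\<omega>. (X \<omega>)\<^sup>2 + (- 2 * g) * X \<omega> + g\<^sup>2)"
    by (auto simp: power2_eq_square algebra_simps)
  then have "integrable M (\<lambda>\<omega>. (X \<omega> - g)\<^sup>2)"
    using assms(3,4) by auto
  from unimodal_symmetric_deviation_bound[OF assms(2) this assms(9,10) \<open>0 < k\<close>]
  have "2 * k * p \<le> sqrt 3 * \<sigma> * (1 - 2 * p)"
    using assms(6-8) by (simp add: p_def real_sqrt_mult)
  moreover have denom: "0 < k + sqrt 3 * \<sigma>"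
    using \<open>0 < k\<close> \<open>\<sigma> \<ge> 0\<close> by (intro add_pos_nonneg) auto
  ultimately have "1/2 + 1/2 * (k / (k + sqrt 3 * \<sigma>)) \<le> 1 - p"
    by (simp add: field_simps)
  moreover have "measure M {\<omega> \<in> space M. sgn (X \<omega>) = sgn g} = 1 - p"
    using prob_sgn_eq_sgn_center[OF assms(2,10,5)] by (simp add: p_def k_def)
  moreover have "0 < k / (k + sqrt 3 * \<sigma>)"
    using \<open>0 < k\<close> denom by (rule divide_pos_pos)
  ultimately show ?thesis
    unfolding k_def by linarith
qed

end
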